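(* Let $d\geqslant1$, let $F$ be a finite abelian group and $G=\mathbb{Z}^d\times F$. Let $A$ be a nonempty subset of $\mathbb{Z}^d$ which has a minimal complement in $\mathbb{Z}^d$. Then for every nonempty subset $H\subseteq F$, the set $A\times H$ has a minimal complement in $G$.
   Context: A nonempty $M$ is a complement of $W$ in an abelian group $G$ if $W+M=G$; it is a minimal complement if no proper subset of $M$ is a complement of $W$. *)

theory Defs
  imports "HOL-Analysis.Analysis"
begin

definition sumset :: "'a::ab_group_add set \<Rightarrow> 'a set \<Rightarrow> 'a set" where
  "sumset W M = {w + m | w m. w \<in> W \<and> m \<in> M}"

definition is_complement :: "'a::ab_group_add set \<Rightarrow> 'a set \<Rightarrow> bool" where
  "is_complement W M \<longleftrightarrow> M \<noteq> {} \<and> sumset W M = UNIV"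

definition is_minimal_complement :: "'a::ab_group_add set \<Rightarrow> 'a set \<Rightarrow> bool" where
  "is_minimal_complement W M \<longleftrightarrow>
     is_complement W M \<and> (\<forall>M'. M' \<subset> M \<longrightarrow> \<not> is_complement W M')"

definition has_minimal_complement :: "'a::ab_group_add set \<Rightarrow> bool" where
  "has_minimal_complement W \<longleftrightarrow> (\<exists>M. is_minimal_complement W M)"

end

theory Submission
  imports Defs
begin

text \<open>A complement \<open>M\<close> of \<open>W\<close> is minimal iff every \<open>m \<in> M\<close> has a private element, one
  that does not lie in \<open>W + (M - {m})\<close>. Since \<open>(A \<times> H) + (M \<times> N) = (A + M) \<times> (H + N)\<close>,
  the products of complements are complements, and pairing private elements of \<open>m\<close> and \<open>n\<close>
  gives a private element of \<open>(m, n)\<close>; so products of minimal complements are minimal.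
  In a finite group the whole group complements every nonempty set, and a complement of least
  cardinality is minimal.\<close>

lemma mem_sumset_iff: "x \<in> sumset W M \<longleftrightarrow> (\<exists>w\<in>W. \<exists>m\<in>M. x = w + m)"
  unfolding sumset_def by blast

lemma sumset_mono: "M \<subseteq> M' \<Longrightarrow> sumset W M \<subseteq> sumset W M'"
  unfolding sumset_def by blast

lemma sumset_Times: "sumset (A \<times> H) (M \<times> N) = sumset A M \<times> sumset H N"
  by (auto simp: mem_sumset_iff)

lemma is_complement_Times:
  assumes "is_complement A M" and "is_complement H N"
  shows "is_complement (A \<times> H) (M \<times> N)"
  using assms by (simp add: is_complement_def sumset_Times)

lemma is_minimal_complement_iff_delete:
  "is_minimal_complement W M \<longleftrightarrow>
     is_complement W M \<and> (\<forall>m\<in>M. sumset W (M - {m}) \<noteq> UNIV)"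
proof
  assume min: "is_minimal_complement W M"
  have "sumset W (M - {m}) \<noteq> UNIV" if "m \<in> M" for m
  proof
    assume full: "sumset W (M - {m}) = UNIV"
    then have "M - {m} \<noteq> {}" by (auto simp: sumset_def)
    with full have "is_complement W (M - {m})" by (simp add: is_complement_def)
    moreover have "M - {m} \<subset> M" using that by blast
    ultimately show False using min by (simp add: is_minimal_complement_def)
  qed
  then show "is_complement W M \<and> (\<forall>m\<in>M. sumset W (M - {m}) \<noteq> UNIV)"
    using min by (simp add: is_minimal_complement_def)
next
  assume asm: "is_complement W M \<and> (\<forall>m\<in>M. sumset W (M - {m}) \<noteq> UNIV)"
  have "\<not> is_complement W M'" if "M' \<subset> M" for M'
  proof
    assume "is_complement W M'"
    obtain m where "m \<in> M" and "M' \<subseteq> M - {m}" using \<open>M' \<subset> M\<close> by blast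
    from \<open>M' \<subseteq> M - {m}\<close> have "sumset W M' \<subseteq> sumset W (M - {m})" by (rule sumset_mono)
    with \<open>is_complement W M'\<close> have "sumset W (M - {m}) = UNIV"
      by (auto simp: is_complement_def)
    with asm \<open>m \<in> M\<close> show False by blast
  qed
  with asm show "is_minimal_complement W M" by (simp add: is_minimal_complement_def)
qed

lemma is_minimal_complement_Times:
  assumes minM: "is_minimal_complement A M" and minN: "is_minimal_complement H N"
  shows "is_minimal_complement (A \<times> H) (M \<times> N)"
  unfolding is_minimal_complement_iff_delete
proof (intro conjI ballI)
  show "is_complement (A \<times> H) (M \<times> N)"
    using assms by (simp add: is_minimal_complement_def is_complement_Times)
next
  fix p assume "p \<in> M \<times> N"
  then obtain m n where p: "p = (m, n)" and "m \<in> M" "n \<in> N" by blast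
  obtain x where x: "x \<notin> sumset A (M - {m})"
    using minM \<open>m \<in> M\<close> by (auto simp: is_minimal_complement_iff_delete)
  obtain y where y: "y \<notin> sumset H (N - {n})"
    using minN \<open>n \<in> N\<close> by (auto simp: is_minimal_complement_iff_delete)
  have "(x, y) \<notin> sumset (A \<times> H) (M \<times> N - {p})"
  proof
    assume "(x, y) \<in> sumset (A \<times> H) (M \<times> N - {p})"
    then obtain a h m' n' where "a \<in> A" "h \<in> H" "m' \<in> M" "n' \<in> N" "(m', n') \<noteq> (m, n)"
        and "x = a + m'" "y = h + n'"
      unfolding mem_sumset_iff p by fastforce
    then show False using x y unfolding mem_sumset_iff by blast
  qed
  then show "sumset (A \<times> H) (M \<times> N - {p}) \<noteq> UNIV" by blast
qed

lemma has_minimal_complement_Times: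
  "has_minimal_complement A \<Longrightarrow> has_minimal_complement H \<Longrightarrow> has_minimal_complement (A \<times> H)"
  unfolding has_minimal_complement_def by (blast intro: is_minimal_complement_Times)

lemma has_minimal_complement_if_finite_complement:
  assumes "is_complement W M" and "finite M"
  shows "has_minimal_complement W"
proof -
  obtain N where N: "N \<subseteq> M" "is_complement W N"
    and least: "\<And>N'. N' \<subseteq> M \<Longrightarrow> is_complement W N' \<Longrightarrow> card N \<le> card N'"
    using ex_has_least_nat[of "\<lambda>N. N \<subseteq> M \<and> is_complement W N" M card] assms(1) by blast
  have "\<not> is_complement W N'" if "N' \<subset> N" for N'
  proof
    assume "is_complement W N'"
    then have "card N \<le> card N'" using least that N(1) by blast
    moreover have "card N' < card N"
      using psubset_card_mono[OF finite_subset[OF N(1) \<open>finite M\<close>] that] .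
    ultimately show False by simp
  qed
  with N(2) show ?thesis
    unfolding has_minimal_complement_def is_minimal_complement_def by blast
qed

lemma has_minimal_complement_finite:
  fixes W :: "'a::{ab_group_add, finite} set"
  assumes "W \<noteq> {}"
  shows "has_minimal_complement W"
proof (rule has_minimal_complement_if_finite_complement)
  obtain w where "w \<in> W" using assms by blast
  then have "z \<in> sumset W UNIV" for z
    by (auto simp: mem_sumset_iff intro!: bexI[of _ w] exI[of _ "z - w"])
  then show "is_complement W UNIV" by (auto simp: is_complement_def)
qed simp

theorem lemma5p5:
  fixes A :: "(int ^ 'd) set" and H :: "('f::{ab_group_add, finite}) set"
  assumes "A \<noteq> {}"
    and "has_minimal_complement A"
    and "H \<noteq> {}"
  shows "has_minimal_complement (A \<times> H)"
  using assms(2) has_minimal_complement_finite[OF assms(3)] by (rule has_minimal_complement_Times)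

end
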